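(* Let $\Sigma=\{xtyxsy\approx xtxyxsy,\ xtysyx\approx xtysxyx\}$. Let $\mathbf w=\mathbf v_1\mathbf v_2x\mathbf v_3$ where $\mathbf v_1,\mathbf v_2,\mathbf v_3$ are words and $x$ is a letter. If $\mathbf v_1$ contains $x$ and $\mathbf v_2$ contains no letter that is simple in $\mathbf w$, then $\Sigma$ implies the identity $\mathbf w\approx\mathbf v_1x\mathbf v_2x\mathbf v_3$ (i.e., every monoid satisfying $\Sigma$ satisfies it).
   Context: Words are elements of the free monoid over a countably infinite alphabet. A letter is simple in a word if it occurs in it exactly once. *)

theory Defs
  imports Main
begin

type_synonym word = "nat list"

definition word_val :: "(nat \<Rightarrow> 'm::monoid_mult) \<Rightarrow> word \<Rightarrow> 'm" where
  "word_val \<phi> w = prod_list (map \<phi> w)"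

definition satisfies :: "'m::monoid_mult itself \<Rightarrow> word \<times> word \<Rightarrow> bool" where
  "satisfies T uv \<longleftrightarrow> (\<forall>\<phi> :: nat \<Rightarrow> 'm. word_val \<phi> (fst uv) = word_val \<phi> (snd uv))"

definition simple_in :: "nat \<Rightarrow> word \<Rightarrow> bool" where
  "simple_in a w \<longleftrightarrow> count_list w a = 1"

text \<open>Sigma = {xtyxsy = xtxyxsy, xtysyx = xtysxyx} with x=0, t=1, y=2, s=3.\<close>
definition Sigma :: "(word \<times> word) set" where
  "Sigma = {([0,1,2,0,3,2], [0,1,0,2,0,3,2]), ([0,1,2,3,2,0], [0,1,2,3,0,2,0])}"

end

theory Submission
  imports Defs
begin

text \<open>
  The key step: if \<open>x\<close> occurs in \<open>P\<close> and \<open>y\<close> is not simple in \<open>P y x Q\<close>, then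
  \<open>P y x Q \<approx> P x y x Q\<close>. This is an instance of \<open>xtyxsy \<approx> xtxyxsy\<close> when \<open>y\<close> recurs in \<open>Q\<close>,
  of \<open>xtysyx \<approx> xtysxyx\<close> when some \<open>x\<close> precedes some \<open>y\<close> in \<open>P\<close>, and otherwise follows by
  combining both with their consequence \<open>xtx \<approx> xtxx\<close>. The letter \<open>x\<close> is then carried across
  \<open>v\<^sub>2\<close> from right to left: in \<open>v\<^sub>1 u y x v\<^sub>3\<close> a copy of \<open>x\<close> is inserted before \<open>y\<close>, moved to the
  front of \<open>u\<close> by induction, and the inserted copy is removed again by the key step read
  backwards.
\<close>

lemma word_val_simps [simp]:
  "word_val \<phi> [] = 1"
  "word_val \<phi> (a # u) = \<phi> a * word_val \<phi> u"
  "word_val \<phi> (u @ v) = word_val \<phi> u * word_val \<phi> v"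
  by (simp_all add: word_val_def)

lemma simple_in_append_Cons_iff:
  "simple_in a (u @ a # v) \<longleftrightarrow> a \<notin> set u \<and> a \<notin> set v"
  by (simp add: simple_in_def count_list_0_iff)

lemma not_simple_in_insert:
  assumes "a \<in> set (u @ v)" and "\<not> simple_in a (u @ v)"
  shows "\<not> simple_in a (u @ b # v)"
  using assms by (auto simp: simple_in_def count_list_0_iff)

lemma two_letters_ordered:
  assumes "x \<in> set w" and "y \<in> set w" and "x \<noteq> y"
  obtains u v where "w = u @ x # v" and "y \<in> set v"
    | u v where "w = u @ y # v" and "x \<in> set v"
proof -
  obtain C D where w: "w = C @ x # D" and "x \<notin> set C"
    using assms(1) split_list_first by metis
  show thesis
  proof (cases "y \<in> set D")
    case True
    with w that(1) show thesis by blast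
  next
    case False
    with assms w have "y \<in> set C" by auto
    then obtain A B where "C = A @ y # B" by (meson split_list)
    with w that(2)[of A "B @ x # D"] show thesis by simp
  qed
qed

locale Sigma_monoid =
  fixes T :: "'m::monoid_mult itself"
  assumes xtyxsy: "\<And>x t y s :: 'm. x * t * y * x * s * y = x * t * x * y * x * s * y"
    and xtysyx: "\<And>x t y s :: 'm. x * t * y * s * y * x = x * t * y * s * x * y * x"
begin

lemma xtx_eq_xtxx: "x * t * x = x * t * x * (x :: 'm)"
  using xtyxsy[of x t 1 1] by simp

lemma word_val_xtx:
  "word_val \<phi> (u @ x # t @ x # v) = word_val \<phi> (u @ x # t @ x # x # v)"
  for \<phi> :: "nat \<Rightarrow> 'm"
  using arg_cong[OF xtx_eq_xtxx[of "\<phi> x" "word_val \<phi> t"],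
      of "\<lambda>z. word_val \<phi> u * z * word_val \<phi> v"]
  by (simp add: mult.assoc)

lemma word_val_xtyxsy:
  "word_val \<phi> (u @ x # t @ y # x # s @ y # v) = word_val \<phi> (u @ x # t @ x # y # x # s @ y # v)"
  for \<phi> :: "nat \<Rightarrow> 'm"
  using arg_cong[OF xtyxsy[of "\<phi> x" "word_val \<phi> t" "\<phi> y" "word_val \<phi> s"],
      of "\<lambda>z. word_val \<phi> u * z * word_val \<phi> v"]
  by (simp add: mult.assoc)

lemma word_val_xtysyx:
  "word_val \<phi> (u @ x # t @ y # s @ y # x # v) = word_val \<phi> (u @ x # t @ y # s @ x # y # x # v)"
  for \<phi> :: "nat \<Rightarrow> 'm"
  using arg_cong[OF xtysyx[of "\<phi> x" "word_val \<phi> t" "\<phi> y" "word_val \<phi> s"],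
      of "\<lambda>z. word_val \<phi> u * z * word_val \<phi> v"]
  by (simp add: mult.assoc)

lemma word_val_duplicate_before_nonsimple:
  fixes \<phi> :: "nat \<Rightarrow> 'm"
  assumes x: "x \<in> set P" and y: "\<not> simple_in y (P @ y # x # Q)"
  shows "word_val \<phi> (P @ y # x # Q) = word_val \<phi> (P @ x # y # x # Q)"
proof -
  obtain P1 P2 where P: "P = P1 @ x # P2"
    using x split_list by metis
  consider (in_Q) "y \<in> set Q" | (eq) "y = x" | (in_P) "y \<in> set P" "y \<noteq> x"
    using y by (auto simp: simple_in_append_Cons_iff)
  then show ?thesis
  proof cases
    case in_Q
    then obtain Q1 Q2 where "Q = Q1 @ y # Q2"
      by (meson split_list)
    with P show ?thesis
      using word_val_xtyxsy[of \<phi> P1 x P2 y Q1 Q2] by simp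
  next
    case eq
    with P show ?thesis
      using word_val_xtx[of \<phi> P1 x P2 "x # Q"] by simp
  next
    case in_P
    show ?thesis
    proof (cases rule: two_letters_ordered[OF x in_P(1) in_P(2)[symmetric]])
      case (1 A B)
      then obtain B1 B2 where "B = B1 @ y # B2"
        by (meson split_list)
      with 1 show ?thesis
        using word_val_xtysyx[of \<phi> A x B1 y B2 Q] by simp
    next
      case (2 A B)
      then obtain B1 B2 where B: "B = B1 @ x # B2"
        by (meson split_list)
      have "word_val \<phi> (P @ y # x # Q) = word_val \<phi> (A @ y # B @ y # x # Q)"
        using 2 by simp
      also have "\<dots> = word_val \<phi> (A @ y # B @ y # y # x # Q)"
        using word_val_xtx[of \<phi> A y B "x # Q"] by simp
      also have "\<dots> = word_val \<phi> (A @ y # B @ y # x # y # x # Q)"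
        using word_val_xtysyx[of \<phi> "A @ y # B1" x B2 y "[]" Q] by (simp add: B)
      also have "\<dots> = word_val \<phi> (A @ y # B @ x # y # x # Q)"
        using word_val_xtyxsy[of \<phi> A y B x "[]" Q] by simp
      also have "\<dots> = word_val \<phi> (P @ x # y # x # Q)"
        using 2 by simp
      finally show ?thesis .
    qed
  qed
qed

lemma word_val_duplicate_across_nonsimple:
  fixes \<phi> :: "nat \<Rightarrow> 'm"
  assumes "x \<in> set v1" and "\<forall>a\<in>set v2. \<not> simple_in a (v1 @ v2 @ [x] @ v3)"
  shows "word_val \<phi> (v1 @ v2 @ [x] @ v3) = word_val \<phi> (v1 @ [x] @ v2 @ [x] @ v3)"
  using assms(2)
proof (induction v2 arbitrary: v3 rule: rev_induct)
  case Nil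
  obtain P1 P2 where "v1 = P1 @ x # P2"
    using assms(1) split_list by metis
  then show ?case
    using word_val_xtx[of \<phi> P1 x P2 v3] by simp
next
  case (snoc y u)
  have y: "\<not> simple_in y ((v1 @ u) @ y # x # v3)"
    using snoc.prems by simp
  then have y': "\<not> simple_in y ((v1 @ x # u) @ y # x # v3)"
    using not_simple_in_insert[of y v1 "u @ y # x # v3" x] by simp
  have "\<forall>a\<in>set u. \<not> simple_in a (v1 @ u @ [x] @ y # x # v3)"
    using snoc.prems not_simple_in_insert[of _ "v1 @ u" "y # x # v3" x] by auto
  note IH = snoc.IH[OF this]
  have "word_val \<phi> (v1 @ (u @ [y]) @ [x] @ v3) = word_val \<phi> ((v1 @ u) @ y # x # v3)"
    by simp
  also have "\<dots> = word_val \<phi> ((v1 @ u) @ x # y # x # v3)"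
    using assms(1) y by (intro word_val_duplicate_before_nonsimple) simp_all
  also have "\<dots> = word_val \<phi> ((v1 @ x # u) @ x # y # x # v3)"
    using IH by simp
  also have "\<dots> = word_val \<phi> ((v1 @ x # u) @ y # x # v3)"
    using assms(1) y' by (intro word_val_duplicate_before_nonsimple[symmetric]) simp_all
  also have "\<dots> = word_val \<phi> (v1 @ [x] @ (u @ [y]) @ [x] @ v3)"
    by simp
  finally show ?case .
qed

end

lemma satisfiesD: "satisfies T (u, v) \<Longrightarrow> word_val \<phi> u = word_val \<phi> v"
  for T :: "'m::monoid_mult itself" and \<phi> :: "nat \<Rightarrow> 'm"
  by (simp add: satisfies_def)

lemma Sigma_monoid_if_satisfies_Sigma:
  fixes T :: "'m::monoid_mult itself"
  assumes "\<forall>p\<in>Sigma. satisfies T p"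
  shows "Sigma_monoid TYPE('m)"
proof unfold_locales
  fix x t y s :: 'm
  have "satisfies T ([0,1,2,0,3,2], [0,1,0,2,0,3,2])" "satisfies T ([0,1,2,3,2,0], [0,1,2,3,0,2,0])"
    using assms by (simp_all add: Sigma_def)
  from this[THEN satisfiesD, of "(!) [x, t, y, s]"]
  show "x * t * y * x * s * y = x * t * x * y * x * s * y"
    and "x * t * y * s * y * x = x * t * y * s * x * y * x"
    by (simp_all add: mult.assoc)
qed

theorem lemma3p3:
  fixes v1 v2 v3 :: word and x :: nat and T :: "'m::monoid_mult itself"
  assumes "\<forall>p\<in>Sigma. satisfies T p"
    and "x \<in> set v1"
    and "\<forall>a\<in>set v2. \<not> simple_in a (v1 @ v2 @ [x] @ v3)"
  shows "satisfies T (v1 @ v2 @ [x] @ v3, v1 @ [x] @ v2 @ [x] @ v3)"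
proof -
  \<comment> \<open>\<open>T\<close> does not occur in the locale assumptions, so the locale predicate is about \<open>TYPE('m)\<close>.\<close>
  interpret Sigma_monoid "TYPE('m)"
    using assms(1) by (rule Sigma_monoid_if_satisfies_Sigma)
  show ?thesis
    unfolding satisfies_def
    using word_val_duplicate_across_nonsimple[OF assms(2,3)] by simp
qed

end
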